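(* In the setting described in the context, assume $0<h<\varepsilon$. There is a constant $C$, independent of $h$ and $\varepsilon$, such that for all $v_h\in\widetilde V_h$, $$\varepsilon^{-1}\sum_{T\in\widetilde{\mathcal T}_h}|\varrho|_{0,\infty,T}\,\|v_h\|_{1,T}^2\le C\,\|v_h\|_h^2,$$ where $|\varrho|_{0,\infty,T}=\sup_T|\varrho|$, $\|v\|_{1,T}$ is the $H^1(T)$-norm, and $\|v_h\|_h=\bigl(\varepsilon^{-1}\sum_{T\in\widetilde{\mathcal T}_h}Q_T[\varrho(|v_h|^2+|\nabla v_h|^2)]\bigr)^{1/2}$.
   Context: $n\in\{1,2\}$; $\Omega\subset\mathbb R^{n+1}$ is a bounded polyhedral domain and $\phi:\overline\Omega\to\mathbb R$ is smooth with $0<c_0\le|\nabla\phi|\le c_1$ on $\overline\Omega$. Quadrature: an integer $q\ge0$ and a rule on the reference simplex with weights $\omega_i>0$, $\sum_{i=1}^L\omega_i=1$, points $\widehat b_i$, exact for polynomials of degree $\le q$; on a simplex $T$, $Q_T(g)=|T|\sum_{i=1}^L\omega_ig(b_{i,T})$, $b_{i,T}=\Phi_T(\widehat b_i)$ with $\Phi_T$ the affine map of the reference simplex onto $T$. $\sigma(r)=\cos^{2(q+1)}(r)$ for $|r|\le\pi/2$, $\sigma(r)=0$ otherwise; $\varrho(x)=\sigma(\phi(x)/\varepsilon)$. $\mathcal T_h$ is a regular (shape-regular) simplicial partition of $\overline\Omega$ with mesh size $h=\max_T\operatorname{diam}T$. $\widetilde{\mathcal T}_h=\{T\in\mathcal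 T_h:|\phi(b_{i,T})|\le\varepsilon\arccos(h/\varepsilon)\text{ for all }i=1,\dots,L\}$, $D_h=\bigcup_{T\in\widetilde{\mathcal T}_h}T$, and $\widetilde V_h=\{v\in C(D_h): v\text{ affine on each }T\in\widetilde{\mathcal T}_h\}$. *)

theory Defs
  imports "HOL-Analysis.Analysis"
begin

fun dd :: "'a::real_normed_vector list \<Rightarrow> ('a \<Rightarrow> real) \<Rightarrow> 'a \<Rightarrow> real" where
  "dd [] f = f"
| "dd (v # vs) f = (\<lambda>x. deriv (\<lambda>t. dd vs f (x + t *\<^sub>R v)) 0)"

definition smooth_on :: "'a::real_normed_vector set \<Rightarrow> ('a \<Rightarrow> real) \<Rightarrow> bool" where
  "smooth_on U f \<longleftrightarrow> open U \<and>
     (\<forall>vs. continuous_on U (dd vs f)) \<and>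
     (\<forall>vs v. \<forall>x\<in>U. (\<lambda>t. dd vs f (x + t *\<^sub>R v)) differentiable (at 0))"

definition smooth_on_closure :: "('a::real_normed_vector \<Rightarrow> real) \<Rightarrow> 'a set \<Rightarrow> bool" where
  "smooth_on_closure f S \<longleftrightarrow> (\<exists>U. closure S \<subseteq> U \<and> smooth_on U f)"

definition grad :: "('a::real_inner \<Rightarrow> real) \<Rightarrow> 'a \<Rightarrow> 'a" where
  "grad f x = (SOME g. (f has_derivative (\<lambda>y. g \<bullet> y)) (at x))"

definition polyhedral_domain :: "'a::euclidean_space set \<Rightarrow> bool" where
  "polyhedral_domain \<Omega> \<longleftrightarrow> open \<Omega> \<and> connected \<Omega> \<and> bounded \<Omega> \<and> \<Omega> \<noteq> {} \<and>
     (\<exists>P. finite P \<and> (\<forall>p\<in>P. finite p) \<and> closure \<Omega> = \<Union>((\<lambda>p. convex hull p) ` P))"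

text \<open>Polynomials of total degree at most q: finite linear combinations of products of
  at most q affine functions.\<close>
definition poly_le :: "nat \<Rightarrow> ('a::real_inner \<Rightarrow> real) \<Rightarrow> bool" where
  "poly_le q g \<longleftrightarrow> (\<exists>N (c::nat \<Rightarrow> real) (m::nat \<Rightarrow> nat) (a::nat \<Rightarrow> nat \<Rightarrow> 'a) (b::nat \<Rightarrow> nat \<Rightarrow> real).
      (\<forall>j<N. m j \<le> q) \<and>
      g = (\<lambda>x. \<Sum>j<N. c j * (\<Prod>k<m j. a j k \<bullet> x + b j k)))"

definition Sref :: "'a::euclidean_space set" where
  "Sref = convex hull (insert 0 Basis)"

definition quad_rule :: "nat \<Rightarrow> nat \<Rightarrow> (nat \<Rightarrow> real) \<Rightarrow> (nat \<Rightarrow> 'a::euclidean_space) \<Rightarrow> bool" where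
  "quad_rule q L \<omega> bh \<longleftrightarrow> L \<ge> 1 \<and> (\<forall>i<L. \<omega> i > 0) \<and> (\<Sum>i<L. \<omega> i) = 1 \<and>
     (\<forall>i<L. bh i \<in> (Sref :: 'a set)) \<and>
     (\<forall>g::'a \<Rightarrow> real. poly_le q g \<longrightarrow>
        measure lebesgue (Sref :: 'a set) * (\<Sum>i<L. \<omega> i * g (bh i)) = integral Sref g)"

section \<open>Simplicial meshes (elements given by their affine maps from the reference simplex)\<close>

definition simplex_map :: "('a::euclidean_space \<Rightarrow> 'a) \<Rightarrow> bool" where
  "simplex_map \<Phi> \<longleftrightarrow> linear (\<lambda>x. \<Phi> x - \<Phi> 0) \<and> inj \<Phi>"

definition cell :: "('a::euclidean_space \<Rightarrow> 'a) \<Rightarrow> 'a set" where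
  "cell \<Phi> = \<Phi> ` Sref"

definition verts :: "('a::euclidean_space \<Rightarrow> 'a) \<Rightarrow> 'a set" where
  "verts \<Phi> = \<Phi> ` insert 0 Basis"

definition simplicial_mesh :: "'a::euclidean_space set \<Rightarrow> ('a \<Rightarrow> 'a) set \<Rightarrow> bool" where
  "simplicial_mesh \<Omega> \<T> \<longleftrightarrow> finite \<T> \<and> \<T> \<noteq> {} \<and> (\<forall>\<Phi>\<in>\<T>. simplex_map \<Phi>) \<and>
     \<Union>(cell ` \<T>) = closure \<Omega> \<and>
     (\<forall>\<Phi>\<in>\<T>. \<forall>\<Psi>\<in>\<T>. \<Phi> \<noteq> \<Psi> \<longrightarrow>
        cell \<Phi> \<noteq> cell \<Psi> \<and> cell \<Phi> \<inter> cell \<Psi> = convex hull (verts \<Phi> \<inter> verts \<Psi>))"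

definition inball_diam :: "'a::euclidean_space set \<Rightarrow> real" where
  "inball_diam T = Sup {2 * r | r. r > 0 \<and> (\<exists>x. ball x r \<subseteq> T)}"

definition shape_regular_mesh :: "real \<Rightarrow> 'a::euclidean_space set \<Rightarrow> ('a \<Rightarrow> 'a) set \<Rightarrow> bool" where
  "shape_regular_mesh \<kappa> \<Omega> \<T> \<longleftrightarrow> simplicial_mesh \<Omega> \<T> \<and>
     (\<forall>\<Phi>\<in>\<T>. diameter (cell \<Phi>) \<le> \<kappa> * inball_diam (cell \<Phi>))"

definition meshsize :: "('a::euclidean_space \<Rightarrow> 'a) set \<Rightarrow> real" where
  "meshsize \<T> = Max (diameter ` cell ` \<T>)"

definition sigma :: "nat \<Rightarrow> real \<Rightarrow> real" where
  "sigma q r = (if \<bar>r\<bar> \<le> pi / 2 then cos r ^ (2 * (q + 1)) else 0)"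

definition rho :: "nat \<Rightarrow> real \<Rightarrow> ('a \<Rightarrow> real) \<Rightarrow> 'a \<Rightarrow> real" where
  "rho q \<epsilon> \<phi> x = sigma q (\<phi> x / \<epsilon>)"

definition QT :: "nat \<Rightarrow> (nat \<Rightarrow> real) \<Rightarrow> (nat \<Rightarrow> 'a::euclidean_space) \<Rightarrow> ('a \<Rightarrow> 'a) \<Rightarrow> ('a \<Rightarrow> real) \<Rightarrow> real" where
  "QT L \<omega> bh \<Phi> g = measure lebesgue (cell \<Phi>) * (\<Sum>i<L. \<omega> i * g (\<Phi> (bh i)))"

definition Ttilde :: "nat \<Rightarrow> (nat \<Rightarrow> 'a::euclidean_space) \<Rightarrow> ('a \<Rightarrow> real) \<Rightarrow> real \<Rightarrow> real \<Rightarrow> ('a \<Rightarrow> 'a) set \<Rightarrow> ('a \<Rightarrow> 'a) set" where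
  "Ttilde L bh \<phi> \<epsilon> h \<T> = {\<Phi>\<in>\<T>. \<forall>i<L. \<bar>\<phi> (\<Phi> (bh i))\<bar> \<le> \<epsilon> * arccos (h / \<epsilon>)}"

definition Dh :: "('a::euclidean_space \<Rightarrow> 'a) set \<Rightarrow> 'a set" where
  "Dh \<T>t = \<Union>(cell ` \<T>t)"

definition Vtilde :: "('a::euclidean_space \<Rightarrow> 'a) set \<Rightarrow> ('a \<Rightarrow> real) set" where
  "Vtilde \<T>t = {v. continuous_on (Dh \<T>t) v \<and>
      (\<forall>\<Phi>\<in>\<T>t. \<exists>a c. \<forall>x\<in>cell \<Phi>. v x = a \<bullet> x + c)}"

definition pgrad :: "('a::euclidean_space \<Rightarrow> 'a) \<Rightarrow> ('a \<Rightarrow> real) \<Rightarrow> 'a" where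
  "pgrad \<Phi> v = (SOME a. \<exists>c. \<forall>x\<in>cell \<Phi>. v x = a \<bullet> x + c)"

definition H1sq :: "('a::euclidean_space \<Rightarrow> 'a) \<Rightarrow> ('a \<Rightarrow> real) \<Rightarrow> real" where
  "H1sq \<Phi> v = integral (cell \<Phi>) (\<lambda>x. (v x)\<^sup>2 + (norm (pgrad \<Phi> v))\<^sup>2)"

definition supnorm_on :: "'a set \<Rightarrow> ('a \<Rightarrow> real) \<Rightarrow> real" where
  "supnorm_on T f = (SUP x\<in>T. \<bar>f x\<bar>)"

definition hnorm_sq :: "nat \<Rightarrow> nat \<Rightarrow> (nat \<Rightarrow> real) \<Rightarrow> (nat \<Rightarrow> 'a::euclidean_space) \<Rightarrow> real \<Rightarrow> ('a \<Rightarrow> real)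
     \<Rightarrow> ('a \<Rightarrow> 'a) set \<Rightarrow> ('a \<Rightarrow> real) \<Rightarrow> real" where
  "hnorm_sq q L \<omega> bh \<epsilon> \<phi> \<T>t v =
     (1 / \<epsilon>) * (\<Sum>\<Phi>\<in>\<T>t. QT L \<omega> bh \<Phi> (\<lambda>x. rho q \<epsilon> \<phi> x * ((v x)\<^sup>2 + (norm (pgrad \<Phi> v))\<^sup>2)))"

end

theory Submission
  imports Defs
begin

text \<open>On every element \<open>T\<close> of the band, \<open>\<rho> = \<sigma>(\<phi>/\<epsilon>)\<close> is comparable to its value at the
  first quadrature point \<open>b\<close>: \<open>\<phi>\<close> is Lipschitz (constant \<open>K\<close>) on the compact set \<open>closure \<Omega>\<close>,
  so \<open>\<phi>/\<epsilon>\<close> varies by at most \<open>K h/\<epsilon>\<close> on \<open>T\<close>, whereas \<open>b\<close> lies in the band, i.e.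
  \<open>cos (\<phi> b/\<epsilon>) \<ge> h/\<epsilon>\<close>. As \<open>cos\<close> is 1-Lipschitz, \<open>sup\<^bsub>T\<^esub> \<rho> \<le> (1 + K)\<^bsup>2(q+1)\<^esup> \<rho> b\<close>.
  For \<open>v\<close> affine on \<open>T\<close> the integrand of the squared \<open>H\<^sup>1(T)\<close>-norm is at most
  \<open>(2 diam(\<Omega>)\<^sup>2 + 2) (v(b)\<^sup>2 + |\<nabla>v|\<^sup>2)\<close>, and \<open>|T| \<rho>(b) (v(b)\<^sup>2 + |\<nabla>v|\<^sup>2)\<close> is the term of
  \<open>Q\<^sub>T\<close> at \<open>b\<close> divided by its (positive) weight. Summing over the band gives the estimate
  with a constant depending only on \<open>\<phi>\<close>, \<open>q\<close>, the first weight and \<open>diam \<Omega>\<close>.\<close>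

lemma abs_cos_diff_le: "\<bar>cos x - cos y\<bar> \<le> \<bar>x - (y::real)\<bar>"
proof -
  have "norm (cos x - cos y) \<le> 1 * norm (x - y)"
    by (rule field_differentiable_bound[of UNIV cos "\<lambda>t. - sin t"])
       (auto intro!: derivative_eq_intros)
  then show ?thesis by simp
qed

lemma sigma_nonneg: "0 \<le> sigma q r"
  unfolding sigma_def power_mult by simp

lemma sigma_le_scaled_sigma:
  assumes "0 < h" "h < \<epsilon>" "0 \<le> K"
    and s: "\<bar>s\<bar> \<le> arccos (h / \<epsilon>)" and rs: "\<bar>r - s\<bar> \<le> K * (h / \<epsilon>)"
  shows "sigma q r \<le> (1 + K) ^ (2 * (q + 1)) * sigma q s"
proof (cases "\<bar>r\<bar> \<le> pi / 2")
  case False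
  then show ?thesis
    using \<open>0 \<le> K\<close> sigma_nonneg[of q s] by (simp add: sigma_def)
next
  case True
  have ratio: "0 \<le> h / \<epsilon>" "h / \<epsilon> \<le> 1" using assms(1,2) by auto
  then have arccos_range: "arccos (h / \<epsilon>) \<le> pi / 2" by (rule arccos_le_pi2)
  with s have s_range: "\<bar>s\<bar> \<le> pi / 2" by simp
  have "cos (arccos (h / \<epsilon>)) \<le> cos \<bar>s\<bar>"
    using s arccos_range by (intro cos_monotone_0_pi_le) auto
  then have cos_s: "h / \<epsilon> \<le> cos s" using ratio by simp
  have "cos r \<le> cos s + \<bar>r - s\<bar>" using abs_cos_diff_le[of r s] by simp
  also have "\<dots> \<le> cos s + K * cos s"
    using rs cos_s \<open>0 \<le> K\<close> mult_left_mono[OF cos_s \<open>0 \<le> K\<close>] by simp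
  finally have "cos r \<le> (1 + K) * cos s" by (simp add: algebra_simps)
  moreover have "0 \<le> cos r" using True by (intro cos_ge_zero) auto
  ultimately have "cos r ^ (2 * (q + 1)) \<le> ((1 + K) * cos s) ^ (2 * (q + 1))"
    by (intro power_mono)
  also have "\<dots> = (1 + K) ^ (2 * (q + 1)) * sigma q s"
    using s_range by (simp only: sigma_def if_True power_mult_distrib)
  finally show ?thesis using True by (simp only: sigma_def if_True)
qed

lemma smooth_on_diff_bound_segment:
  fixes f :: "'a::euclidean_space \<Rightarrow> real"
  assumes sm: "smooth_on U f"
    and in_U: "\<And>t. t \<in> closed_segment 0 c \<Longrightarrow> z + t *\<^sub>R j \<in> U"
    and bound: "\<And>t. t \<in> closed_segment 0 c \<Longrightarrow> \<bar>dd [j] f (z + t *\<^sub>R j)\<bar> \<le> M"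
  shows "\<bar>f (z + c *\<^sub>R j) - f z\<bar> \<le> M * \<bar>c\<bar>"
proof -
  let ?g = "\<lambda>t. f (z + t *\<^sub>R j)"
  have "(?g has_field_derivative dd [j] f (z + t *\<^sub>R j)) (at t within closed_segment 0 c)"
    if t: "t \<in> closed_segment 0 c" for t
  proof -
    have "(\<lambda>s. f ((z + t *\<^sub>R j) + s *\<^sub>R j)) differentiable (at 0)"
      using sm in_U[OF t] unfolding smooth_on_def by (metis dd.simps(1))
    then have "((\<lambda>s. ?g (s + t)) has_field_derivative dd [j] f (z + t *\<^sub>R j)) (at 0)"
      by (simp add: DERIV_deriv_iff_real_differentiable algebra_simps)
    then have "(?g has_field_derivative dd [j] f (z + t *\<^sub>R j)) (at (0 + t))"
      using DERIV_shift by blast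
    then show ?thesis by (simp add: has_field_derivative_at_within)
  qed
  then have "norm (?g c - ?g 0) \<le> M * norm (c - 0)"
    by (intro field_differentiable_bound[OF convex_closed_segment])
       (auto simp del: dd.simps simp: bound)
  then show ?thesis by simp
qed

text \<open>\<open>smooth_on\<close> provides directional derivatives only, not a total derivative, so
  increments are estimated along a staircase path parallel to the coordinate axes; it stays
  inside the ball whose radius is the \<open>\<ell>\<^sup>1\<close>-norm of the displacement.\<close>
lemma smooth_on_staircase_bound:
  fixes f :: "'a::euclidean_space \<Rightarrow> real"
  assumes "finite B" "B \<subseteq> Basis" and sm: "smooth_on U f" and ball_U: "cball x r \<subseteq> U"
    and bound: "\<And>j y. j \<in> Basis \<Longrightarrow> y \<in> cball x r \<Longrightarrow> \<bar>dd [j] f y\<bar> \<le> M"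
    and l1: "(\<Sum>j\<in>Basis. \<bar>d \<bullet> j\<bar>) \<le> r"
  shows "\<bar>f (x + (\<Sum>j\<in>B. (d \<bullet> j) *\<^sub>R j)) - f x\<bar> \<le> M * (\<Sum>j\<in>B. \<bar>d \<bullet> j\<bar>)"
  using assms(1,2)
proof (induction B rule: finite_induct)
  case empty
  then show ?case by simp
next
  case (insert j B)
  let ?p = "x + (\<Sum>i\<in>B. (d \<bullet> i) *\<^sub>R i)"
  have j: "j \<in> Basis" using insert by auto
  have "?p + t *\<^sub>R j \<in> cball x r" if t: "t \<in> closed_segment 0 (d \<bullet> j)" for t
  proof -
    have "\<bar>t\<bar> \<le> \<bar>d \<bullet> j\<bar>" using t by (auto simp: closed_segment_eq_real_ivl split: if_splits)
    have "dist x (?p + t *\<^sub>R j) = norm ((\<Sum>i\<in>B. (d \<bullet> i) *\<^sub>R i) + t *\<^sub>R j)"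
      using dist_add_cancel[of x 0] by (simp add: add.assoc)
    also have "\<dots> \<le> (\<Sum>i\<in>B. norm ((d \<bullet> i) *\<^sub>R i)) + norm (t *\<^sub>R j)"
      by (rule order_trans[OF norm_triangle_ineq add_right_mono[OF norm_sum]])
    also have "\<dots> = (\<Sum>i\<in>B. \<bar>d \<bullet> i\<bar>) + \<bar>t\<bar>"
      using insert by (simp add: subset_iff)
    also have "\<dots> \<le> (\<Sum>i\<in>insert j B. \<bar>d \<bullet> i\<bar>)"
      using insert \<open>\<bar>t\<bar> \<le> \<bar>d \<bullet> j\<bar>\<close> by simp
    also have "\<dots> \<le> (\<Sum>i\<in>Basis. \<bar>d \<bullet> i\<bar>)"
      using insert by (intro sum_mono2) auto
    finally show ?thesis using l1 by simp
  qed
  then have "\<bar>f (?p + (d \<bullet> j) *\<^sub>R j) - f ?p\<bar> \<le> M * \<bar>d \<bullet> j\<bar>"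
    using ball_U bound j by (intro smooth_on_diff_bound_segment[OF sm]) auto
  moreover have "x + (\<Sum>i\<in>insert j B. (d \<bullet> i) *\<^sub>R i) = ?p + (d \<bullet> j) *\<^sub>R j"
    using insert by (simp add: algebra_simps)
  ultimately show ?case using insert by (simp add: algebra_simps)
qed

lemma lipschitz_on_if_locally_bounded_slope:
  fixes f :: "'a::metric_space \<Rightarrow> real"
  assumes "0 < \<delta>" "0 \<le> M"
    and bounded: "\<And>x. x \<in> S \<Longrightarrow> \<bar>f x\<bar> \<le> B"
    and local: "\<And>x y. x \<in> S \<Longrightarrow> y \<in> S \<Longrightarrow> dist x y \<le> \<delta> \<Longrightarrow> \<bar>f x - f y\<bar> \<le> M * dist x y"
  shows "(max M (2 * B / \<delta>))-lipschitz_on S f"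
proof (rule lipschitz_onI)
  fix x y assume xy: "x \<in> S" "y \<in> S"
  show "dist (f x) (f y) \<le> max M (2 * B / \<delta>) * dist x y"
  proof (cases "dist x y \<le> \<delta>")
    case True
    then have "\<bar>f x - f y\<bar> \<le> M * dist x y" using local xy by blast
    also have "\<dots> \<le> max M (2 * B / \<delta>) * dist x y" by (intro mult_right_mono) auto
    finally show ?thesis by (simp add: dist_real_def)
  next
    case False
    have "\<bar>f x - f y\<bar> \<le> 2 * B" using bounded[OF xy(1)] bounded[OF xy(2)] by simp
    also have "\<dots> = (2 * B / \<delta>) * \<delta>" using \<open>0 < \<delta>\<close> by simp
    also have "\<dots> \<le> max M (2 * B / \<delta>) * dist x y"
      using False \<open>0 < \<delta>\<close> \<open>0 \<le> M\<close> by (intro mult_mono) auto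
    finally show ?thesis by (simp add: dist_real_def)
  qed
qed (use assms(2) in simp)

lemma smooth_on_lipschitz_on_compact:
  fixes f :: "'a::euclidean_space \<Rightarrow> real"
  assumes sm: "smooth_on U f" and S: "compact S" "S \<subseteq> U"
  obtains L where "L-lipschitz_on S f"
proof -
  have cont: "continuous_on U (dd vs f)" for vs using sm unfolding smooth_on_def by blast
  obtain \<delta> where "0 < \<delta>" and nbhd_U: "(\<Union>x\<in>S. cball x \<delta>) \<subseteq> U"
    using compact_subset_open_imp_cball_epsilon_subset[OF S(1) _ S(2)] sm
    unfolding smooth_on_def by blast
  define K where "K = {x + y | x y. x \<in> S \<and> y \<in> cball 0 \<delta>}"
  have "compact K" unfolding K_def by (intro compact_sums S compact_cball)
  have ball_K: "cball x \<delta> \<subseteq> K" if "x \<in> S" for x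
  proof
    fix y assume "y \<in> cball x \<delta>"
    then show "y \<in> K" unfolding K_def using that
      by (intro CollectI exI[of _ x] exI[of _ "y - x"]) (auto simp: dist_norm norm_minus_commute)
  qed
  have "K \<subseteq> U"
  proof
    fix z assume "z \<in> K"
    then obtain x y where "z = x + y" "x \<in> S" "norm y \<le> \<delta>" unfolding K_def by auto
    then have "z \<in> cball x \<delta>" by (simp add: dist_norm)
    then show "z \<in> U" using nbhd_U \<open>x \<in> S\<close> by blast
  qed
  then have "continuous_on K (\<lambda>y. \<Sum>j\<in>Basis. \<bar>dd [j] f y\<bar>)"
    by (intro continuous_intros continuous_on_subset[OF cont])
  then have "bounded ((\<lambda>y. \<Sum>j\<in>Basis. \<bar>dd [j] f y\<bar>) ` K)"
    using \<open>compact K\<close> compact_continuous_image compact_imp_bounded by blast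
  then obtain M0 where M0: "\<And>y. y \<in> K \<Longrightarrow> norm (\<Sum>j\<in>Basis. \<bar>dd [j] f y\<bar>) \<le> M0"
    unfolding bounded_iff by blast
  define M where "M = max M0 0"
  have partials: "\<bar>dd [j] f y\<bar> \<le> M" if "j \<in> Basis" "y \<in> K" for j y
    using member_le_sum[of j Basis "\<lambda>j. \<bar>dd [j] f y\<bar>"] M0[OF that(2)] that(1)
    unfolding M_def by auto
  have "continuous_on S f" using cont[of "[]"] S(2) continuous_on_subset by fastforce
  then have "bounded (f ` S)" using S(1) compact_continuous_image compact_imp_bounded by blast
  then obtain B where B: "\<And>x. x \<in> S \<Longrightarrow> \<bar>f x\<bar> \<le> B"
    unfolding bounded_iff real_norm_def by blast
  define N where "N = real DIM('a)"
  have "0 < N" unfolding N_def by simp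
  have "\<bar>f x - f y\<bar> \<le> (M * N) * dist x y"
    if "x \<in> S" "y \<in> S" "dist x y \<le> \<delta> / N" for x y
  proof -
    define d where "d = y - x"
    have "(\<Sum>j\<in>Basis. \<bar>d \<bullet> j\<bar>) \<le> (\<Sum>j\<in>(Basis::'a set). norm d)"
      by (intro sum_mono) (simp add: Basis_le_norm)
    then have l1: "(\<Sum>j\<in>Basis. \<bar>d \<bullet> j\<bar>) \<le> N * norm d" by (simp add: N_def)
    also have "\<dots> \<le> \<delta>"
      using that(3) \<open>0 < N\<close> by (simp add: d_def dist_norm norm_minus_commute field_simps)
    finally have "\<bar>f (x + (\<Sum>j\<in>Basis. (d \<bullet> j) *\<^sub>R j)) - f x\<bar> \<le> M * (\<Sum>j\<in>Basis. \<bar>d \<bullet> j\<bar>)"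
      using ball_K[OF that(1)] \<open>K \<subseteq> U\<close> partials
      by (intro smooth_on_staircase_bound[OF finite_Basis order_refl sm]) auto
    also have "\<dots> \<le> M * (N * norm d)" using l1 by (intro mult_left_mono) (auto simp: M_def)
    finally show ?thesis
      by (simp add: d_def euclidean_representation dist_norm norm_minus_commute abs_minus_commute)
  qed
  then have "(max (M * N) (2 * B / (\<delta> / N)))-lipschitz_on S f"
    using \<open>0 < \<delta>\<close> \<open>0 < N\<close> B by (intro lipschitz_on_if_locally_bounded_slope) (auto simp: M_def)
  then show ?thesis using that by blast
qed

lemma compact_cell:
  assumes "simplex_map \<Phi>"
  shows "compact (cell \<Phi>)"
proof -
  have "bounded_linear (\<lambda>x. \<Phi> x - \<Phi> 0)"
    using assms by (simp add: simplex_map_def linear_conv_bounded_linear)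
  then have "continuous_on UNIV (\<lambda>x. (\<Phi> x - \<Phi> 0) + \<Phi> 0)"
    by (intro continuous_intros linear_continuous_on)
  then have "continuous_on UNIV \<Phi>" by simp
  moreover have "compact (Sref :: 'a set)"
    unfolding Sref_def by (rule finite_imp_compact_convex_hull) simp
  ultimately show ?thesis
    unfolding cell_def by (meson compact_continuous_image continuous_on_subset subset_UNIV)
qed

lemma diameter_cell_le_meshsize:
  assumes "finite \<T>" "\<Phi> \<in> \<T>"
  shows "diameter (cell \<Phi>) \<le> meshsize \<T>"
  unfolding meshsize_def using assms by (intro Max_ge) auto

lemma supnorm_on_bounds:
  assumes "x\<^sub>0 \<in> T" and bound: "\<And>x. x \<in> T \<Longrightarrow> \<bar>f x\<bar> \<le> B"
  shows "0 \<le> supnorm_on T f" "supnorm_on T f \<le> B"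
proof -
  have "bdd_above ((\<lambda>x. \<bar>f x\<bar>) ` T)" using bound by (intro bdd_aboveI2)
  then have "\<bar>f x\<^sub>0\<bar> \<le> supnorm_on T f"
    unfolding supnorm_on_def using assms(1) by (rule cSUP_upper2) simp
  then show "0 \<le> supnorm_on T f" by linarith
  show "supnorm_on T f \<le> B"
    unfolding supnorm_on_def using assms by (intro cSUP_least) auto
qed

lemma rho_le_scaled_rho:
  fixes \<phi> :: "'a::metric_space \<Rightarrow> real"
  assumes "K-lipschitz_on T \<phi>" "x \<in> T" "b \<in> T" "dist x b \<le> h"
    and "0 < h" "h < \<epsilon>" and band: "\<bar>\<phi> b\<bar> \<le> \<epsilon> * arccos (h / \<epsilon>)"
  shows "rho q \<epsilon> \<phi> x \<le> (1 + K) ^ (2 * (q + 1)) * rho q \<epsilon> \<phi> b"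
proof -
  have "0 < \<epsilon>" "0 \<le> K" using assms(5,6) lipschitz_on_nonneg[OF assms(1)] by auto
  have "\<bar>\<phi> x - \<phi> b\<bar> \<le> K * dist x b"
    using lipschitz_onD[OF assms(1-3)] by (simp add: dist_real_def)
  also have "\<dots> \<le> K * h" using assms(4) \<open>0 \<le> K\<close> by (rule mult_left_mono)
  finally have "\<bar>\<phi> x / \<epsilon> - \<phi> b / \<epsilon>\<bar> \<le> K * (h / \<epsilon>)"
    using \<open>0 < \<epsilon>\<close> by (simp add: diff_divide_distrib[symmetric] divide_right_mono)
  moreover have "\<bar>\<phi> b / \<epsilon>\<bar> \<le> arccos (h / \<epsilon>)" using band \<open>0 < \<epsilon>\<close> by (simp add: field_simps)
  ultimately show ?thesis
    unfolding rho_def using sigma_le_scaled_sigma assms(5,6) \<open>0 \<le> K\<close> by blast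
qed

lemma affine_square_le:
  fixes a x b :: "'a::real_inner"
  assumes "norm (x - b) \<le> D"
  shows "(a \<bullet> x + c)\<^sup>2 \<le> 2 * (a \<bullet> b + c)\<^sup>2 + 2 * D\<^sup>2 * (norm a)\<^sup>2"
proof -
  have "\<bar>a \<bullet> (x - b)\<bar> \<le> norm a * D"
    using Cauchy_Schwarz_ineq2[of a "x - b"] mult_left_mono[OF assms norm_ge_zero[of a]] by simp
  then have "(a \<bullet> (x - b))\<^sup>2 \<le> (norm a * D)\<^sup>2"
    by (metis abs_ge_zero power2_abs power_mono)
  have sq_sum: "(u + w)\<^sup>2 \<le> 2 * u\<^sup>2 + 2 * w\<^sup>2" for u w :: real
    using zero_le_power2[of "u - w"] by (simp add: power2_sum power2_diff)
  have "(a \<bullet> x + c)\<^sup>2 = ((a \<bullet> b + c) + a \<bullet> (x - b))\<^sup>2"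
    by (simp add: algebra_simps)
  also have "\<dots> \<le> 2 * (a \<bullet> b + c)\<^sup>2 + 2 * (a \<bullet> (x - b))\<^sup>2" by (rule sq_sum)
  also have "\<dots> \<le> 2 * (a \<bullet> b + c)\<^sup>2 + 2 * (norm a * D)\<^sup>2"
    using \<open>(a \<bullet> (x - b))\<^sup>2 \<le> (norm a * D)\<^sup>2\<close> by simp
  finally show ?thesis by (simp add: power_mult_distrib mult_ac)
qed

lemma integral_le_measure_mult:
  fixes g :: "'a::euclidean_space \<Rightarrow> real"
  assumes "compact T" "continuous_on T g"
    and bound: "\<And>x. x \<in> T \<Longrightarrow> 0 \<le> g x" "\<And>x. x \<in> T \<Longrightarrow> g x \<le> B"
  shows "integral T g \<le> measure lebesgue T * B"
proof -
  have T: "T \<in> lmeasurable" using assms(1) lmeasurable_compact by blast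
  then have "g \<in> borel_measurable (lebesgue_on T)"
    using assms(2) continuous_imp_measurable_on_sets_lebesgue by blast
  then have "g absolutely_integrable_on T"
    using bound T by (intro measurable_bounded_by_integrable_imp_absolutely_integrable[of g T "\<lambda>x. B"])
      (auto intro: integrable_on_const)
  then have "integral T g \<le> integral T (\<lambda>x. B)"
    using bound(2) by (intro integral_le integrable_on_const[OF T]) (auto simp: absolutely_integrable_on_def)
  also have "\<dots> = measure lebesgue T * B"
    using lmeasure_integral[OF T] integral_mult_left[of T "\<lambda>x. 1::real" B] by simp
  finally show ?thesis .
qed

lemma pgrad_affine:
  assumes "\<exists>a c. \<forall>x\<in>cell \<Phi>. v x = a \<bullet> x + c"
  shows "\<exists>c. \<forall>x\<in>cell \<Phi>. v x = pgrad \<Phi> v \<bullet> x + c"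
  unfolding pgrad_def using assms by (rule someI_ex)

lemma H1sq_affine_le:
  assumes "simplex_map \<Phi>" "\<exists>a c. \<forall>x\<in>cell \<Phi>. v x = a \<bullet> x + c"
    and "b \<in> cell \<Phi>" "diameter (cell \<Phi>) \<le> D"
  shows "H1sq \<Phi> v \<le> measure lebesgue (cell \<Phi>) * ((2 * D\<^sup>2 + 2) * ((v b)\<^sup>2 + (norm (pgrad \<Phi> v))\<^sup>2))"
proof -
  define a where "a = pgrad \<Phi> v"
  obtain c where v: "\<And>x. x \<in> cell \<Phi> \<Longrightarrow> v x = a \<bullet> x + c"
    using pgrad_affine[OF assms(2)] unfolding a_def by blast
  have cpt: "compact (cell \<Phi>)" using assms(1) by (rule compact_cell)
  have "(a \<bullet> x + c)\<^sup>2 + (norm a)\<^sup>2 \<le> (2 * D\<^sup>2 + 2) * ((v b)\<^sup>2 + (norm a)\<^sup>2)" if "x \<in> cell \<Phi>" for x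
  proof -
    have "norm (x - b) \<le> D"
      using diameter_bounded_bound[OF compact_imp_bounded[OF cpt] that assms(3)] assms(4)
      by (simp add: dist_norm)
    then have "(a \<bullet> x + c)\<^sup>2 \<le> 2 * (v b)\<^sup>2 + 2 * D\<^sup>2 * (norm a)\<^sup>2"
      using affine_square_le v[OF assms(3)] by metis
    moreover have "0 \<le> D\<^sup>2 * (v b)\<^sup>2" "0 \<le> (norm a)\<^sup>2" by simp_all
    ultimately show ?thesis by (simp only: algebra_simps)
  qed
  then have "integral (cell \<Phi>) (\<lambda>x. (a \<bullet> x + c)\<^sup>2 + (norm a)\<^sup>2)
      \<le> measure lebesgue (cell \<Phi>) * ((2 * D\<^sup>2 + 2) * ((v b)\<^sup>2 + (norm a)\<^sup>2))"
    using cpt by (intro integral_le_measure_mult continuous_intros) auto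
  moreover have "H1sq \<Phi> v = integral (cell \<Phi>) (\<lambda>x. (a \<bullet> x + c)\<^sup>2 + (norm a)\<^sup>2)"
    unfolding H1sq_def a_def[symmetric] by (rule integral_cong) (simp add: v)
  ultimately show ?thesis by (simp add: a_def)
qed

lemma QT_ge_first_node:
  assumes "quad_rule q L \<omega> bh" "\<And>x. 0 \<le> g x"
  shows "measure lebesgue (cell \<Phi>) * (\<omega> 0 * g (\<Phi> (bh 0))) \<le> QT L \<omega> bh \<Phi> g"
proof -
  have "0 < L" "\<forall>i<L. 0 < \<omega> i" using assms(1) unfolding quad_rule_def by auto
  then have "\<omega> 0 * g (\<Phi> (bh 0)) \<le> (\<Sum>i<L. \<omega> i * g (\<Phi> (bh i)))"
    using assms(2) by (intro member_le_sum) (auto intro: mult_nonneg_nonneg less_imp_le)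
  then show ?thesis unfolding QT_def by (intro mult_left_mono) auto
qed

lemma supnorm_rho_mult_H1sq_le_QT:
  fixes \<Phi> :: "'a::euclidean_space \<Rightarrow> 'a" and \<phi> v :: "'a \<Rightarrow> real"
  assumes quad: "quad_rule q L \<omega> bh" and "simplex_map \<Phi>"
    and lip: "K-lipschitz_on (cell \<Phi>) \<phi>"
    and diam: "diameter (cell \<Phi>) \<le> h" "diameter (cell \<Phi>) \<le> D" and "0 < h" "h < \<epsilon>"
    and band: "\<bar>\<phi> (\<Phi> (bh 0))\<bar> \<le> \<epsilon> * arccos (h / \<epsilon>)"
    and affine: "\<exists>a c. \<forall>x\<in>cell \<Phi>. v x = a \<bullet> x + c"
  shows "supnorm_on (cell \<Phi>) (rho q \<epsilon> \<phi>) * H1sq \<Phi> v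
     \<le> ((1 + K) ^ (2 * (q + 1)) * (2 * D\<^sup>2 + 2) / \<omega> 0) *
        QT L \<omega> bh \<Phi> (\<lambda>x. rho q \<epsilon> \<phi> x * ((v x)\<^sup>2 + (norm (pgrad \<Phi> v))\<^sup>2))"
proof -
  define b where "b = \<Phi> (bh 0)"
  define C\<^sub>\<rho> where "C\<^sub>\<rho> = (1 + K) ^ (2 * (q + 1))"
  define W where "W = (v b)\<^sup>2 + (norm (pgrad \<Phi> v))\<^sup>2"
  let ?\<rho> = "rho q \<epsilon> \<phi>" and ?m = "measure lebesgue (cell \<Phi>)"
  have "0 < \<omega> 0" "bh 0 \<in> Sref" using quad unfolding quad_rule_def by auto
  then have b: "b \<in> cell \<Phi>" unfolding b_def cell_def by simp
  have "0 \<le> K" using lip by (rule lipschitz_on_nonneg)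
  have \<rho>_nonneg: "0 \<le> ?\<rho> x" for x unfolding rho_def by (rule sigma_nonneg)
  have \<rho>_bound: "\<bar>?\<rho> x\<bar> \<le> C\<^sub>\<rho> * ?\<rho> b" if "x \<in> cell \<Phi>" for x
    unfolding C\<^sub>\<rho>_def abs_of_nonneg[OF \<rho>_nonneg]
  proof (rule rho_le_scaled_rho[OF lip that b _ \<open>0 < h\<close> \<open>h < \<epsilon>\<close>])
    show "dist x b \<le> h"
      using diameter_bounded_bound[OF compact_imp_bounded[OF compact_cell] that b] diam(1)
        \<open>simplex_map \<Phi>\<close> by force
  qed (use band b_def in simp)
  have sup: "0 \<le> supnorm_on (cell \<Phi>) ?\<rho>" "supnorm_on (cell \<Phi>) ?\<rho> \<le> C\<^sub>\<rho> * ?\<rho> b"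
    using supnorm_on_bounds[OF b \<rho>_bound] by simp_all
  have "supnorm_on (cell \<Phi>) ?\<rho> * H1sq \<Phi> v \<le> supnorm_on (cell \<Phi>) ?\<rho> * (?m * ((2 * D\<^sup>2 + 2) * W))"
    unfolding W_def using H1sq_affine_le[OF \<open>simplex_map \<Phi>\<close> affine b diam(2)] sup(1)
    by (rule mult_left_mono)
  also have "\<dots> \<le> (C\<^sub>\<rho> * ?\<rho> b) * (?m * ((2 * D\<^sup>2 + 2) * W))"
    using sup(2) by (rule mult_right_mono) (simp add: W_def)
  also have "\<dots> = (C\<^sub>\<rho> * (2 * D\<^sup>2 + 2) / \<omega> 0) * (?m * (\<omega> 0 * (?\<rho> b * W)))"
    using \<open>0 < \<omega> 0\<close> by (simp add: field_simps)
  also have "\<dots> \<le> (C\<^sub>\<rho> * (2 * D\<^sup>2 + 2) / \<omega> 0) *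
      QT L \<omega> bh \<Phi> (\<lambda>x. ?\<rho> x * ((v x)\<^sup>2 + (norm (pgrad \<Phi> v))\<^sup>2))"
    using QT_ge_first_node[OF quad, of "\<lambda>x. ?\<rho> x * ((v x)\<^sup>2 + (norm (pgrad \<Phi> v))\<^sup>2)" \<Phi>]
      \<rho>_nonneg \<open>0 \<le> K\<close> \<open>0 < \<omega> 0\<close>
    by (intro mult_left_mono) (simp_all add: b_def W_def C\<^sub>\<rho>_def)
  finally show ?thesis unfolding C\<^sub>\<rho>_def .
qed

theorem mainTheorem4:
  fixes \<Omega> :: "'a::euclidean_space set" and \<phi> :: "'a \<Rightarrow> real"
    and c0 c1 :: real and q L :: nat and \<omega> :: "nat \<Rightarrow> real" and bh :: "nat \<Rightarrow> 'a"
    and \<kappa> :: real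
  assumes "DIM('a) \<in> {2, 3}"
    and "polyhedral_domain \<Omega>"
    and "smooth_on_closure \<phi> \<Omega>"
    and "0 < c0"
    and "\<forall>x\<in>closure \<Omega>. c0 \<le> norm (grad \<phi> x) \<and> norm (grad \<phi> x) \<le> c1"
    and "quad_rule q L \<omega> bh"
  shows "\<exists>C. \<forall>\<epsilon> h \<T> v.
     shape_regular_mesh \<kappa> \<Omega> \<T> \<and> h = meshsize \<T> \<and> 0 < h \<and> h < \<epsilon> \<and>
     v \<in> Vtilde (Ttilde L bh \<phi> \<epsilon> h \<T>) \<longrightarrow>
       (1 / \<epsilon>) * (\<Sum>\<Phi>\<in>Ttilde L bh \<phi> \<epsilon> h \<T>.
           supnorm_on (cell \<Phi>) (rho q \<epsilon> \<phi>) * H1sq \<Phi> v)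
       \<le> C * hnorm_sq q L \<omega> bh \<epsilon> \<phi> (Ttilde L bh \<phi> \<epsilon> h \<T>) v"
proof -
  have "compact (closure \<Omega>)"
    using assms(2) unfolding polyhedral_domain_def by simp
  moreover obtain U where "closure \<Omega> \<subseteq> U" "smooth_on U \<phi>"
    using assms(3) unfolding smooth_on_closure_def by blast
  ultimately obtain K where lip: "K-lipschitz_on (closure \<Omega>) \<phi>"
    using smooth_on_lipschitz_on_compact by blast
  define C where "C = (1 + K) ^ (2 * (q + 1)) * (2 * (diameter (closure \<Omega>))\<^sup>2 + 2) / \<omega> 0"
  have "(1 / \<epsilon>) * (\<Sum>\<Phi>\<in>Ttilde L bh \<phi> \<epsilon> h \<T>. supnorm_on (cell \<Phi>) (rho q \<epsilon> \<phi>) * H1sq \<Phi> v)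
      \<le> C * hnorm_sq q L \<omega> bh \<epsilon> \<phi> (Ttilde L bh \<phi> \<epsilon> h \<T>) v"
    if mesh: "shape_regular_mesh \<kappa> \<Omega> \<T>" and h: "h = meshsize \<T>" "0 < h" "h < \<epsilon>"
      and v: "v \<in> Vtilde (Ttilde L bh \<phi> \<epsilon> h \<T>)" for \<epsilon> h \<T> v
  proof -
    have "0 < L" using assms(6) unfolding quad_rule_def by simp
    have "supnorm_on (cell \<Phi>) (rho q \<epsilon> \<phi>) * H1sq \<Phi> v
        \<le> C * QT L \<omega> bh \<Phi> (\<lambda>x. rho q \<epsilon> \<phi> x * ((v x)\<^sup>2 + (norm (pgrad \<Phi> v))\<^sup>2))"
      if \<Phi>: "\<Phi> \<in> Ttilde L bh \<phi> \<epsilon> h \<T>" for \<Phi>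
    proof -
      have "\<Phi> \<in> \<T>" "finite \<T>" "simplex_map \<Phi>" "cell \<Phi> \<subseteq> closure \<Omega>"
        using mesh \<Phi> unfolding shape_regular_mesh_def simplicial_mesh_def Ttilde_def by auto
      then show ?thesis
        unfolding C_def using \<Phi> v \<open>0 < L\<close> \<open>compact (closure \<Omega>)\<close> h
        by (intro supnorm_rho_mult_H1sq_le_QT[OF assms(6)] lipschitz_on_subset[OF lip]
            diameter_subset compact_imp_bounded)
          (auto simp: Ttilde_def Vtilde_def diameter_cell_le_meshsize)
    qed
    then show ?thesis
      unfolding hnorm_sq_def sum_distrib_left mult.left_commute[of C]
      using h by (intro mult_left_mono sum_mono) auto
  qed
  then show ?thesis by blast
qed

end
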